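(* Let $L\in\mathbb N$ and $0\le p<1$. Consider the Elephant Random Walk with finite disordered memory of length $L$ and acceptance probability $p$, defined as follows. A jar initially contains $N_0^+$ signs $+1$ and $N_0^-$ signs $-1$ with $N_0^++N_0^-=L$, and $X_0\in\mathbb Z$ is arbitrary. Inductively, at step $n+1$: a sign is drawn uniformly at random from the $L$ signs in the jar and removed (without replacement); independently, with probability $p$ it is kept and with probability $1-p$ it is multiplied by $-1$, giving the new sign $s_{n+1}\in\{\pm1\}$; set $X_{n+1}=X_n+s_{n+1}$; and put $s_{n+1}$ into the jar (so the jar again contains $L$ signs). Then $$\lim_{t\to\infty}\frac{X_t}{t}=0\ \text{ a.s.},\qquad \frac{X_t}{\sqrt t}\Rightarrow N\Big(0,\frac{p}{1-p}\Big).$$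
   Context: $N(0,\sigma^2)$ denotes the centered normal distribution with variance $\sigma^2$ (a point mass at $0$ when $\sigma^2=0$); $\Rightarrow$ denotes convergence in distribution. *)

theory Defs
  imports "HOL-Probability.Probability"
begin

text \<open>The randomness of step n+1 is a pair (i, keep):
  i is a uniformly random position in the jar (uniform draw of one of the L signs),
  keep is a Bernoulli(p) coin (True: keep the sign, False: multiply by -1).\<close>

definition erw_step :: "int list \<times> int \<Rightarrow> nat \<times> bool \<Rightarrow> int list \<times> int" where
  "erw_step st r =
     (let jar = fst st; x = snd st; i = fst r; d = jar ! i;
          s = (if snd r then d else - d)
      in (take i jar @ drop (Suc i) jar @ [s], x + s))"

primrec erw_state :: "int list \<Rightarrow> int \<Rightarrow> nat \<Rightarrow> (nat \<times> bool) stream \<Rightarrow> int list \<times> int" where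
  "erw_state jar0 x0 0 \<omega> = (jar0, x0)"
| "erw_state jar0 x0 (Suc n) \<omega> = erw_step (erw_state jar0 x0 n \<omega>) (\<omega> !! n)"

definition erw_X :: "int list \<Rightarrow> int \<Rightarrow> nat \<Rightarrow> (nat \<times> bool) stream \<Rightarrow> int" where
  "erw_X jar0 x0 t \<omega> = snd (erw_state jar0 x0 t \<omega>)"

definition erw_space :: "nat \<Rightarrow> real \<Rightarrow> (nat \<times> bool) stream measure" where
  "erw_space L p = stream_space (measure_pmf (pair_pmf (pmf_of_set {..<L}) (bernoulli_pmf p)))"

definition normal_law :: "real \<Rightarrow> real measure" where
  "normal_law v = (if v = 0 then return borel 0 else density lborel (normal_density 0 (sqrt v)))"

end

theory Submission
  imports Defs "HOL-Real_Asymp.Real_Asymp"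
begin

text \<open>
  Let \<open>J\<close> be the sum of the signs in the jar and \<open>q = p / (1 - p)\<close>. Then
  \<open>M = X - (1 - 2p) / (2 (1 - p)) * J\<close> is a martingale whose increment, given the drawn sign
  \<open>d\<close>, is \<open>d\<close> with probability \<open>p\<close> and \<open>-q d\<close> otherwise: it has conditional mean \<open>0\<close> and
  conditional variance exactly \<open>q\<close>, whatever the jar contains. As \<open>|J| \<le> L\<close>, \<open>X\<close> and \<open>M\<close>
  differ by a bounded amount. Iterating the one-step estimate
  \<open>E exp(i h \<Delta>M) = 1 - q h\<^sup>2 / 2 + O(|h|\<^sup>3)\<close> along the chain gives the central limit theorem,
  and iterating Hoeffding's lemma for the bounded increments gives exponential tail bounds for
  \<open>M\<^sub>t - M\<^sub>0\<close>, which by Borel--Cantelli yield \<open>X\<^sub>t / t \<rightarrow> 0\<close> almost surely.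
\<close>

section \<open>Iterated random maps\<close>

definition random_iterate :: "('s \<Rightarrow> 'r \<Rightarrow> 's) \<Rightarrow> nat \<Rightarrow> 's \<Rightarrow> 'r stream \<Rightarrow> 's" where
  "random_iterate f n s \<omega> = fold (\<lambda>r s. f s r) (stake n \<omega>) s"

primrec iterate_pmf :: "'r pmf \<Rightarrow> ('s \<Rightarrow> 'r \<Rightarrow> 's) \<Rightarrow> nat \<Rightarrow> 's \<Rightarrow> 's pmf" where
  "iterate_pmf R f 0 s = return_pmf s"
| "iterate_pmf R f (Suc n) s = bind_pmf R (\<lambda>r. iterate_pmf R f n (f s r))"

lemma random_iterate_0 [simp]: "random_iterate f 0 s \<omega> = s"
  by (simp add: random_iterate_def)

lemma random_iterate_Suc: "random_iterate f (Suc n) s \<omega> = f (random_iterate f n s \<omega>) (\<omega> !! n)"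
  unfolding random_iterate_def stake_Suc by simp

lemma random_iterate_Suc_shift:
  "random_iterate f (Suc n) s \<omega> = random_iterate f n (f s (shd \<omega>)) (stl \<omega>)"
  by (cases \<omega>) (simp add: random_iterate_def)

lemma prob_space_stream_space_pmf: "prob_space (stream_space (measure_pmf R))"
  by (rule prob_space.prob_space_stream_space) (rule prob_space_measure_pmf)

lemma measurable_random_iterate [measurable]:
  fixes f :: "'s::countable \<Rightarrow> 'r::countable \<Rightarrow> 's"
  shows "random_iterate f n s \<in> measurable (stream_space (measure_pmf R)) (count_space UNIV)"
proof -
  have "stake n \<in> measurable (stream_space (measure_pmf R)) (count_space UNIV)"
    by measurable
  then show ?thesis
    unfolding random_iterate_def[abs_def]
    by (rule measurable_compose[where g = "\<lambda>xs. fold (\<lambda>r s. f s r) xs s"]) simp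
qed

lemma distr_random_iterate:
  fixes f :: "'s::countable \<Rightarrow> 'r::countable \<Rightarrow> 's"
  shows "distr (stream_space (measure_pmf R)) (count_space UNIV) (random_iterate f n s) =
    measure_pmf (iterate_pmf R f n s)"
proof (induction n arbitrary: s)
  case 0
  interpret prob_space "stream_space (measure_pmf R)" by (rule prob_space_stream_space_pmf)
  show ?case
    by (rule measure_eqI_countable[where A = UNIV]) (auto simp: emeasure_distr split: split_indicator)
next
  case (Suc n)
  let ?S = "stream_space (measure_pmf R)"
  show ?case
  proof (rule measure_eqI_countable[where A = UNIV])
    fix v :: 's
    have "emeasure (distr ?S (count_space UNIV) (random_iterate f (Suc n) s)) {v} =
          emeasure ?S (random_iterate f (Suc n) s -` {v} \<inter> space ?S)"
      by (rule emeasure_distr) auto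
    also have "\<dots> = (\<integral>\<^sup>+r. emeasure ?S {\<omega>\<in>space ?S. r ## \<omega> \<in> random_iterate f (Suc n) s -` {v} \<inter> space ?S} \<partial>measure_pmf R)"
      by (rule prob_space.emeasure_stream_space[OF prob_space_measure_pmf]) simp
    also have "\<dots> = (\<integral>\<^sup>+r. emeasure ?S (random_iterate f n (f s r) -` {v} \<inter> space ?S) \<partial>measure_pmf R)"
      by (intro nn_integral_cong arg_cong[where f = "emeasure ?S"])
         (auto simp: random_iterate_Suc_shift space_stream_space)
    also have "\<dots> = emeasure (iterate_pmf R f (Suc n) s) {v}"
      by (simp add: Suc[symmetric] emeasure_distr)
    finally show "emeasure (distr ?S (count_space UNIV) (random_iterate f (Suc n) s)) {v} =
      emeasure (iterate_pmf R f (Suc n) s) {v}" .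
  qed auto
qed

lemma integral_random_iterate:
  fixes f :: "'s::countable \<Rightarrow> 'r::countable \<Rightarrow> 's"
    and g :: "'s \<Rightarrow> 'b::{banach, second_countable_topology}"
  shows "(\<integral>\<omega>. g (random_iterate f n s \<omega>) \<partial>stream_space (measure_pmf R)) = (\<integral>v. g v \<partial>iterate_pmf R f n s)"
  by (simp flip: distr_random_iterate add: integral_distr)

lemma set_iterate_pmf_subset:
  assumes "\<And>s r. s \<in> V \<Longrightarrow> r \<in> set_pmf R \<Longrightarrow> f s r \<in> V" and "s \<in> V"
  shows "set_pmf (iterate_pmf R f n s) \<subseteq> V"
  using assms(2) by (induction n arbitrary: s) (auto dest: assms(1))

lemma finite_set_iterate_pmf:
  "finite (set_pmf R) \<Longrightarrow> finite (set_pmf (iterate_pmf R f n s))"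
  by (induction n arbitrary: s) auto

lemma integral_bind_pmf_finite:
  fixes g :: "'b \<Rightarrow> 'c::{banach, second_countable_topology}"
  assumes fin: "finite (set_pmf M)" and finN: "\<And>x. x \<in> set_pmf M \<Longrightarrow> finite (set_pmf (N x))"
  shows "(\<integral>y. g y \<partial>bind_pmf M N) = (\<integral>x. (\<integral>y. g y \<partial>N x) \<partial>M)"
proof -
  define A where "A = (\<Union>x\<in>set_pmf M. set_pmf (N x))"
  have finA: "finite A" unfolding A_def using fin finN by auto
  have "(\<integral>y. g y \<partial>bind_pmf M N) = (\<Sum>a\<in>A. pmf (bind_pmf M N) a *\<^sub>R g a)"
    by (rule integral_measure_pmf[OF finA]) (auto simp: A_def)
  also have "\<dots> = (\<Sum>a\<in>A. (\<Sum>x\<in>set_pmf M. pmf M x * pmf (N x) a) *\<^sub>R g a)"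
  proof (intro sum.cong refl arg_cong2[where f = "(*\<^sub>R)"])
    fix a
    have "pmf (bind_pmf M N) a = (\<integral>x. pmf (N x) a \<partial>M)" by (rule pmf_bind)
    also have "\<dots> = (\<Sum>x\<in>set_pmf M. pmf M x * pmf (N x) a)"
      by (subst integral_measure_pmf[OF fin]) auto
    finally show "pmf (bind_pmf M N) a = (\<Sum>x\<in>set_pmf M. pmf M x * pmf (N x) a)" .
  qed
  also have "\<dots> = (\<Sum>x\<in>set_pmf M. pmf M x *\<^sub>R (\<Sum>a\<in>A. pmf (N x) a *\<^sub>R g a))"
    by (simp add: scaleR_sum_left scaleR_sum_right sum.swap[of _ A])
  also have "\<dots> = (\<Sum>x\<in>set_pmf M. pmf M x *\<^sub>R (\<integral>y. g y \<partial>N x))"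
    by (intro sum.cong refl arg_cong2[where f = "(*\<^sub>R)"] integral_measure_pmf[OF finA, symmetric])
       (auto simp: A_def)
  also have "\<dots> = (\<integral>x. (\<integral>y. g y \<partial>N x) \<partial>M)"
    by (rule integral_measure_pmf[OF fin, symmetric]) auto
  finally show ?thesis .
qed

lemma integral_iterate_pmf_Suc:
  fixes g :: "'s \<Rightarrow> 'c::{banach, second_countable_topology}"
  assumes "finite (set_pmf R)"
  shows "(\<integral>v. g v \<partial>iterate_pmf R f (Suc n) s) = (\<integral>r. (\<integral>v. g v \<partial>iterate_pmf R f n (f s r)) \<partial>R)"
  using assms by (simp add: integral_bind_pmf_finite finite_set_iterate_pmf)

lemma norm_integral_iterate_pmf_approx:
  fixes \<psi> :: "'s \<Rightarrow> complex" and a :: complex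
  assumes fin: "finite (set_pmf R)"
    and inv: "\<And>s r. s \<in> V \<Longrightarrow> r \<in> set_pmf R \<Longrightarrow> f s r \<in> V"
    and step: "\<And>s. s \<in> V \<Longrightarrow> cmod ((\<integral>r. \<psi> (f s r) \<partial>R) - a * \<psi> s) \<le> \<delta>"
    and a: "cmod a \<le> 1" and "s \<in> V"
  shows "cmod ((\<integral>v. \<psi> v \<partial>iterate_pmf R f n s) - a ^ n * \<psi> s) \<le> real n * \<delta>"
  using \<open>s \<in> V\<close>
proof (induction n arbitrary: s)
  case (Suc n)
  define E where "E r = (\<integral>v. \<psi> v \<partial>iterate_pmf R f n (f s r))" for r
  have int: "integrable R g" for g :: "_ \<Rightarrow> complex"
    using fin by (rule integrable_measure_pmf_finite)
  have "(\<integral>v. \<psi> v \<partial>iterate_pmf R f (Suc n) s) - a ^ Suc n * \<psi> s =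
      (\<integral>r. E r - a ^ n * \<psi> (f s r) \<partial>R) + a ^ n * ((\<integral>r. \<psi> (f s r) \<partial>R) - a * \<psi> s)"
    unfolding integral_iterate_pmf_Suc[OF fin] E_def
    by (simp add: Bochner_Integration.integral_diff[OF int int] algebra_simps)
  also have "cmod \<dots> \<le> real n * \<delta> + 1 * \<delta>"
  proof (rule norm_triangle_le[OF add_mono])
    have "cmod (\<integral>r. E r - a ^ n * \<psi> (f s r) \<partial>R) \<le> (\<integral>r. cmod (E r - a ^ n * \<psi> (f s r)) \<partial>R)"
      by (rule integral_norm_bound)
    also have "\<dots> \<le> real n * \<delta>"
      using Suc inv fin
      by (intro measure_pmf.integral_le_const integrable_measure_pmf_finite)
         (auto simp: E_def AE_measure_pmf_iff)
    finally show "cmod (\<integral>r. E r - a ^ n * \<psi> (f s r) \<partial>R) \<le> real n * \<delta>" .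
    show "cmod (a ^ n * ((\<integral>r. \<psi> (f s r) \<partial>R) - a * \<psi> s)) \<le> 1 * \<delta>"
      unfolding norm_mult norm_power
      by (intro mult_mono power_le_one step Suc.prems a) (use step[OF Suc.prems] in auto)
  qed
  finally show ?case by (simp add: algebra_simps)
qed simp

lemma nn_integral_iterate_pmf_le:
  fixes g :: "'s \<Rightarrow> ennreal"
  assumes inv: "\<And>s r. s \<in> V \<Longrightarrow> r \<in> set_pmf R \<Longrightarrow> f s r \<in> V"
    and step: "\<And>s. s \<in> V \<Longrightarrow> (\<integral>\<^sup>+r. g (f s r) \<partial>R) \<le> c * g s" and "s \<in> V"
  shows "(\<integral>\<^sup>+v. g v \<partial>iterate_pmf R f n s) \<le> c ^ n * g s"
  using \<open>s \<in> V\<close>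
proof (induction n arbitrary: s)
  case (Suc n)
  have "(\<integral>\<^sup>+v. g v \<partial>iterate_pmf R f (Suc n) s) = (\<integral>\<^sup>+r. (\<integral>\<^sup>+v. g v \<partial>iterate_pmf R f n (f s r)) \<partial>R)"
    by simp
  also have "\<dots> \<le> (\<integral>\<^sup>+r. c ^ n * g (f s r) \<partial>R)"
    using Suc inv by (intro nn_integral_mono_AE) (auto simp: AE_measure_pmf_iff)
  also have "\<dots> = c ^ n * (\<integral>\<^sup>+r. g (f s r) \<partial>R)"
    by (rule nn_integral_cmult) simp
  also have "\<dots> \<le> c ^ n * (c * g s)"
    by (intro mult_left_mono step Suc.prems) simp
  finally show ?case by (simp add: mult_ac)
qed simp

lemma AE_random_iterate_mem:
  fixes f :: "'s::countable \<Rightarrow> 'r::countable \<Rightarrow> 's"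
  assumes "\<And>s r. s \<in> V \<Longrightarrow> r \<in> set_pmf R \<Longrightarrow> f s r \<in> V" and "s \<in> V"
  shows "AE \<omega> in stream_space (measure_pmf R). \<forall>t. random_iterate f t s \<omega> \<in> V"
proof (subst AE_all_countable, intro allI)
  fix t
  have "AE v in distr (stream_space (measure_pmf R)) (count_space UNIV) (random_iterate f t s). v \<in> V"
    unfolding distr_random_iterate AE_measure_pmf_iff
    using set_iterate_pmf_subset[where R = R and f = f, OF assms] by blast
  then show "AE \<omega> in stream_space (measure_pmf R). random_iterate f t s \<omega> \<in> V"
    by (subst (asm) AE_distr_iff) auto
qed

lemma AE_eventually_random_iterate_notin:
  fixes f :: "'s::countable \<Rightarrow> 'r::countable \<Rightarrow> 's"
  assumes "summable (\<lambda>t. measure_pmf.prob (iterate_pmf R f t s) (A t))"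
  shows "AE \<omega> in stream_space (measure_pmf R). eventually (\<lambda>t. random_iterate f t s \<omega> \<notin> A t) sequentially"
proof -
  let ?S = "stream_space (measure_pmf R)"
  interpret S: prob_space ?S by (rule prob_space_stream_space_pmf)
  define E where "E t = random_iterate f t s -` A t \<inter> space ?S" for t
  have E: "measure ?S (E t) = measure_pmf.prob (iterate_pmf R f t s) (A t)" for t
    using measure_distr[OF measurable_random_iterate[of f t s R], of "A t"]
    by (simp add: E_def distr_random_iterate)
  have "summable (\<lambda>t. measure ?S (E t))"
    using assms by (simp add: E)
  then have "AE \<omega> in ?S. eventually (\<lambda>t. \<omega> \<in> space ?S - E t) sequentially"
    by (intro borel_cantelli_AE1) (simp_all add: E_def S.emeasure_eq_measure)
  then show ?thesis
    by (rule AE_mp) (auto simp: E_def elim: eventually_mono)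
qed

lemma tendsto_div_zero_if_eventually_abs_less:
  fixes y :: "nat \<Rightarrow> real"
  assumes "\<And>k. eventually (\<lambda>t. \<bar>y t\<bar> < real t / real (Suc k)) sequentially"
  shows "(\<lambda>t. y t / real t) \<longlonglongrightarrow> 0"
proof (rule tendstoI)
  fix e :: real assume "e > 0"
  then obtain k where k: "inverse (real (Suc k)) < e" using reals_Archimedean by blast
  show "eventually (\<lambda>t. dist (y t / real t) 0 < e) sequentially"
    using assms[of k] eventually_gt_at_top[of 0]
  proof eventually_elim
    case (elim t)
    then have "\<bar>y t / real t\<bar> < 1 / real (Suc k)"
      by (simp add: abs_div field_simps)
    with k show ?case by (simp add: dist_real_def inverse_eq_divide)
  qed
qed

lemma tendsto_div_zero_bounded_diff:
  fixes x y :: "nat \<Rightarrow> real"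
  assumes "(\<lambda>t. y t / real t) \<longlonglongrightarrow> 0" and "\<And>t. \<bar>x t - y t\<bar> \<le> C"
  shows "(\<lambda>t. x t / real t) \<longlonglongrightarrow> 0"
proof -
  have "(\<lambda>t. (x t - y t) / real t) \<longlonglongrightarrow> 0"
    using assms(2) by (intro Lim_null_comparison[OF _ lim_const_over_n[of C]] always_eventually allI)
      (simp add: abs_div divide_right_mono)
  from tendsto_add[OF this assms(1)] show ?thesis
    by (simp add: add_divide_distrib[symmetric])
qed

lemma tendsto_power_one_minus_sq_div_sqrt:
  "(\<lambda>t. (1 - c * (u / sqrt (real t))^2 / 2) ^ t) \<longlonglongrightarrow> exp (- (c * u^2 / 2))"
proof (rule Lim_transform_eventually[OF tendsto_exp_limit_sequentially])
  show "eventually (\<lambda>t. (1 + - (c * u^2 / 2) / real t) ^ t = (1 - c * (u / sqrt (real t))^2 / 2) ^ t)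
      sequentially"
    using eventually_gt_at_top[of 0] by eventually_elim (simp add: power_divide mult.commute)
qed

lemma norm_iexp_sub_taylor2: "cmod (iexp x - (1 + \<i> * x - x^2 / 2)) \<le> \<bar>x\<bar>^3 / 6"
proof -
  have "(\<Sum>k \<le> 2. (\<i> * complex_of_real x)^k / fact k) = 1 + \<i> * x - x^2 / 2"
    by (simp add: numeral_2_eq_2 power2_eq_square algebra_simps)
  then show ?thesis using iexp_approx1[of x 2] by (simp add: numeral_3_eq_3)
qed

lemma two_point_char_approx:
  fixes p x y :: real
  assumes p: "0 \<le> p" "p \<le> 1" and mean: "p * x + (1 - p) * y = 0"
  shows "cmod (p * iexp x + (1 - p) * iexp y - complex_of_real (1 - (p * x^2 + (1 - p) * y^2) / 2))
    \<le> (\<bar>x\<bar>^3 + \<bar>y\<bar>^3) / 6"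
proof -
  let ?r = "\<lambda>x. iexp x - (1 + \<i> * x - x^2 / 2)"
  have "p * iexp x + (1 - p) * iexp y - (1 - (p * x^2 + (1 - p) * y^2) / 2) =
      p * ?r x + (1 - p) * ?r y + \<i> * complex_of_real (p * x + (1 - p) * y)"
    by (simp add: algebra_simps diff_divide_distrib add_divide_distrib)
  also have "cmod \<dots> \<le> p * (\<bar>x\<bar>^3 / 6) + (1 - p) * (\<bar>y\<bar>^3 / 6)"
  proof -
    have "cmod (1 - complex_of_real p) = 1 - p"
      using p by (metis abs_of_nonneg diff_ge_0_iff_ge norm_of_real of_real_1 of_real_diff)
    then have "cmod (p * ?r x + (1 - p) * ?r y) \<le> p * cmod (?r x) + (1 - p) * cmod (?r y)"
      using norm_triangle_ineq[of "p * ?r x" "(1 - p) * ?r y"] p by (simp add: norm_mult)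
    also have "\<dots> \<le> p * (\<bar>x\<bar>^3 / 6) + (1 - p) * (\<bar>y\<bar>^3 / 6)"
      using p by (intro add_mono mult_left_mono norm_iexp_sub_taylor2) auto
    finally show ?thesis using mean by simp
  qed
  also have "\<dots> \<le> (\<bar>x\<bar>^3 + \<bar>y\<bar>^3) / 6"
    unfolding add_divide_distrib using p by (intro add_mono mult_left_le_one_le) auto
  finally show ?thesis .
qed

lemma norm_iexp_sub_iexp_le: "cmod (iexp x - iexp y) \<le> \<bar>x - y\<bar>"
proof -
  have "iexp x - iexp y = iexp y * (iexp (x - y) - 1)"
    by (simp add: algebra_simps flip: exp_add)
  then show ?thesis
    using iexp_approx1[of "x - y" 0] by (simp add: norm_mult)
qed

lemma sign_flip_char_approx:
  fixes p d h :: real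
  assumes p: "0 \<le> p" "p < 1" and d: "\<bar>d\<bar> = 1"
  defines "q \<equiv> p / (1 - p)"
  shows "cmod (p * iexp (h * d) + (1 - p) * iexp (- q * h * d) - complex_of_real (1 - q * h^2 / 2))
    \<le> (1 + q^3) * \<bar>h\<bar>^3 / 6"
proof -
  have q: "(1 - p) * q = p" and "\<bar>q\<bar> = q" using p by (simp_all add: q_def)
  have "d^2 = 1" using d by (simp add: abs_square_eq_1)
  then have "p * (h * d)^2 + (1 - p) * (- q * h * d)^2 = (p + (1 - p) * q * q) * h^2"
    by (simp add: power_mult_distrib) (simp add: power2_eq_square algebra_simps)
  also have "\<dots> = (p + p * q) * h^2" using q by simp
  also have "\<dots> = q * h^2" using q unfolding left_diff_distrib by simp
  finally have var: "p * (h * d)^2 + (1 - p) * (- q * h * d)^2 = q * h^2" .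
  have "p * (h * d) + (1 - p) * (- q * h * d) = (p - (1 - p) * q) * (h * d)"
    by (simp add: algebra_simps)
  then have "p * (h * d) + (1 - p) * (- q * h * d) = 0" using q by simp
  from two_point_char_approx[OF p(1) less_imp_le[OF p(2)] this]
  have "cmod (p * iexp (h * d) + (1 - p) * iexp (- q * h * d) - complex_of_real (1 - q * h^2 / 2))
      \<le> (\<bar>h * d\<bar>^3 + \<bar>- q * h * d\<bar>^3) / 6"
    unfolding var .
  also have "\<dots> = (1 + q^3) * \<bar>h\<bar>^3 / 6"
    using d \<open>\<bar>q\<bar> = q\<close> by (simp add: abs_mult power_mult_distrib algebra_simps)
  finally show ?thesis .
qed

lemma Hoeffdings_lemma_pmf:
  fixes D :: "'a \<Rightarrow> real"
  assumes "measure_pmf.expectation R D = 0" and "\<And>r. r \<in> set_pmf R \<Longrightarrow> \<bar>D r\<bar> \<le> B" and "l > 0"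
  shows "(\<integral>\<^sup>+r. exp (l * D r) \<partial>R) \<le> exp (l^2 * B^2 / 2)"
proof -
  interpret interval_bounded_random_variable "measure_pmf R" D "- B" B
    by unfold_locales (use assms(2) in \<open>auto simp: AE_measure_pmf_iff abs_le_iff minus_le_iff\<close>)
  have "(\<integral>\<^sup>+r. exp (l * D r) \<partial>R) \<le> exp (l^2 * (B - - B)^2 / 8)"
    by (rule Hoeffdings_lemma_nn_integral_0[OF assms(3,1)])
  also have "l^2 * (B - - B)^2 / 8 = l^2 * B^2 / 2"
    by (simp add: power2_eq_square algebra_simps)
  finally show ?thesis .
qed

lemma Chernoff_bound_pmf:
  fixes Y :: "'a \<Rightarrow> real" and K :: "'a pmf"
  assumes "l > 0"
  shows "emeasure K {v. a \<le> Y v} \<le> ennreal (exp (- l * a)) * (\<integral>\<^sup>+v. exp (l * Y v) \<partial>K)"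
proof -
  have "indicator {v. a \<le> Y v} v \<le> ennreal (exp (- l * a)) * ennreal (exp (l * Y v))" for v
  proof (cases "a \<le> Y v")
    case True
    then have "1 \<le> exp (- l * a) * exp (l * Y v)"
      using mult_left_mono[OF True less_imp_le[OF assms]] by (simp add: mult_exp_exp algebra_simps)
    then show ?thesis
      using True by (simp flip: ennreal_mult ennreal_1 add: ennreal_leI)
  qed simp
  then have "(\<integral>\<^sup>+v. indicator {v. a \<le> Y v} v \<partial>K) \<le> (\<integral>\<^sup>+v. ennreal (exp (- l * a)) * ennreal (exp (l * Y v)) \<partial>K)"
    by (intro nn_integral_mono)
  then show ?thesis by (simp add: nn_integral_cmult)
qed

section \<open>The elephant random walk and its martingale\<close>

definition erw_pmf :: "nat \<Rightarrow> real \<Rightarrow> (nat \<times> bool) pmf" where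
  "erw_pmf L p = pair_pmf (pmf_of_set {..<L}) (bernoulli_pmf p)"

definition erw_states :: "nat \<Rightarrow> (int list \<times> int) set" where
  "erw_states L = {s. length (fst s) = L \<and> set (fst s) \<subseteq> {1, -1}}"

lemma erw_space_eq: "erw_space L p = stream_space (measure_pmf (erw_pmf L p))"
  by (simp add: erw_space_def erw_pmf_def)

lemma erw_X_eq_random_iterate: "erw_X jar0 x0 t \<omega> = snd (random_iterate erw_step t (jar0, x0) \<omega>)"
proof -
  have "erw_state jar0 x0 t \<omega> = random_iterate erw_step t (jar0, x0) \<omega>"
    by (induction t) (simp_all add: random_iterate_Suc)
  then show ?thesis by (simp add: erw_X_def)
qed

lemma set_pmf_erw_pmf: "L \<ge> 1 \<Longrightarrow> set_pmf (erw_pmf L p) \<subseteq> {..<L} \<times> UNIV"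
  by (auto simp: erw_pmf_def lessThan_empty_iff)

lemma finite_set_pmf_erw_pmf: "L \<ge> 1 \<Longrightarrow> finite (set_pmf (erw_pmf L p))"
  by (rule finite_subset[OF set_pmf_erw_pmf]) auto

lemma integral_erw_pmf:
  fixes F :: "nat \<times> bool \<Rightarrow> 'b::{banach, second_countable_topology}"
  assumes "L \<ge> 1" "0 \<le> p" "p \<le> 1"
  shows "(\<integral>r. F r \<partial>erw_pmf L p) = (\<Sum>i<L. (1 / real L) *\<^sub>R (p *\<^sub>R F (i, True) + (1 - p) *\<^sub>R F (i, False)))"
proof -
  have "(\<integral>r. F r \<partial>erw_pmf L p) = (\<Sum>r\<in>{..<L} \<times> UNIV. pmf (erw_pmf L p) r *\<^sub>R F r)"
    using set_pmf_erw_pmf[OF \<open>L \<ge> 1\<close>] by (intro integral_measure_pmf) auto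
  also have "\<dots> = (\<Sum>i<L. \<Sum>b\<in>UNIV. pmf (erw_pmf L p) (i, b) *\<^sub>R F (i, b))"
    by (simp add: sum.cartesian_product)
  also have "\<dots> = (\<Sum>i<L. (1 / real L) *\<^sub>R (p *\<^sub>R F (i, True) + (1 - p) *\<^sub>R F (i, False)))"
    using assms by (intro sum.cong refl) (auto simp: UNIV_bool erw_pmf_def pmf_pair lessThan_empty_iff scaleR_add_right)
  finally show ?thesis .
qed

lemma norm_integral_erw_pmf_le:
  fixes F :: "nat \<times> bool \<Rightarrow> 'b::{banach, second_countable_topology}"
  assumes "L \<ge> 1" "0 \<le> p" "p \<le> 1"
    and bound: "\<And>i. i < L \<Longrightarrow> norm (p *\<^sub>R F (i, True) + (1 - p) *\<^sub>R F (i, False)) \<le> B"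
  shows "norm (\<integral>r. F r \<partial>erw_pmf L p) \<le> B"
proof -
  have "norm (\<integral>r. F r \<partial>erw_pmf L p) \<le> (\<Sum>i<L. (1 / real L) * B)"
    unfolding integral_erw_pmf[OF assms(1-3)]
    by (rule order.trans[OF norm_sum sum_mono]) (simp add: bound divide_right_mono)
  also have "\<dots> = B" using \<open>L \<ge> 1\<close> by simp
  finally show ?thesis .
qed

lemma erw_step_mem_erw_states:
  assumes L: "L \<ge> 1" and s: "s \<in> erw_states L" and r: "r \<in> set_pmf (erw_pmf L p)"
  shows "erw_step s r \<in> erw_states L"
proof -
  obtain i b where ib: "r = (i, b)" by (cases r)
  with r have "i < length (fst s)"
    using set_pmf_erw_pmf[OF L] s by (auto simp: erw_states_def)
  then have "fst s ! i \<in> set (fst s)" by simp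
  then have "fst s ! i \<in> {1, -1}"
    using s unfolding erw_states_def by blast
  then show ?thesis
    using s ib set_take_subset[of i "fst s"] set_drop_subset[of "Suc i" "fst s"] \<open>i < length (fst s)\<close>
    by (auto simp: erw_states_def erw_step_def Let_def)
qed

lemma set_pmf_iterate_erw_pmf:
  "L \<ge> 1 \<Longrightarrow> s0 \<in> erw_states L \<Longrightarrow> set_pmf (iterate_pmf (erw_pmf L p) erw_step t s0) \<subseteq> erw_states L"
  by (rule set_iterate_pmf_subset) (auto intro: erw_step_mem_erw_states)

definition erw_mart :: "real \<Rightarrow> int list \<times> int \<Rightarrow> real" where
  "erw_mart p s = real_of_int (snd s) - (1 - 2 * p) / (2 * (1 - p)) * real_of_int (sum_list (fst s))"

lemma erw_mart_erw_step:
  assumes "i < length (fst s)" and "p < 1"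
  shows "erw_mart p (erw_step s (i, b)) =
    erw_mart p s + (if b then 1 else - (p / (1 - p))) * real_of_int (fst s ! i)"
proof -
  have "sum_list (fst s) = sum_list (take i (fst s)) + fst s ! i + sum_list (drop (Suc i) (fst s))"
    using assms(1) by (metis add.assoc id_take_nth_drop sum_list.Cons sum_list_append)
  then show ?thesis
    using \<open>p < 1\<close> by (simp add: erw_mart_def erw_step_def Let_def field_simps)
qed

lemma abs_sum_list_signs_le: "set xs \<subseteq> {1, -1} \<Longrightarrow> \<bar>sum_list xs\<bar> \<le> int (length xs)"
  for xs :: "int list"
  by (induction xs) auto

lemma erw_mart_close_to_X: "\<exists>C. \<forall>s\<in>erw_states L. \<bar>real_of_int (snd s) - erw_mart p s\<bar> \<le> C"
proof -
  define c where "c = (1 - 2 * p) / (2 * (1 - p))"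
  have "\<bar>real_of_int (snd s) - erw_mart p s\<bar> \<le> \<bar>c\<bar> * L" if "s \<in> erw_states L" for s
  proof -
    have "\<bar>sum_list (fst s)\<bar> \<le> int L"
      using abs_sum_list_signs_le[of "fst s"] that by (simp add: erw_states_def)
    then have "\<bar>real_of_int (sum_list (fst s))\<bar> \<le> real L"
      by (metis of_int_abs of_int_le_iff of_int_of_nat_eq)
    moreover have "real_of_int (snd s) - erw_mart p s = c * real_of_int (sum_list (fst s))"
      by (simp add: erw_mart_def c_def)
    ultimately show ?thesis
      by (simp add: abs_mult mult_left_mono)
  qed
  then show ?thesis by blast
qed

lemma erw_states_nth: "s \<in> erw_states L \<Longrightarrow> i < L \<Longrightarrow> \<bar>real_of_int (fst s ! i)\<bar> = 1"
  by (auto simp: erw_states_def dest!: nth_mem[of i "fst s"] subsetD[of "set (fst s)"])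

lemma expectation_erw_mart_step:
  assumes L: "L \<ge> 1" and p: "0 \<le> p" "p < 1" and s: "s \<in> erw_states L"
  shows "(\<integral>r. erw_mart p (erw_step s r) \<partial>erw_pmf L p) = erw_mart p s"
proof -
  have "norm (\<integral>r. erw_mart p (erw_step s r) - erw_mart p s \<partial>erw_pmf L p) \<le> 0"
  proof (rule norm_integral_erw_pmf_le[OF L p(1) less_imp_le[OF p(2)]])
    fix i assume "i < L"
    then have "i < length (fst s)" using s by (simp add: erw_states_def)
    then show "norm (p *\<^sub>R (erw_mart p (erw_step s (i, True)) - erw_mart p s) +
        (1 - p) *\<^sub>R (erw_mart p (erw_step s (i, False)) - erw_mart p s)) \<le> 0"
      using p by (simp add: erw_mart_erw_step)
  qed
  then show ?thesis
    by (subst (asm) Bochner_Integration.integral_diff)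
       (auto intro: integrable_measure_pmf_finite finite_set_pmf_erw_pmf[OF L])
qed

lemma abs_erw_mart_step_le:
  assumes L: "L \<ge> 1" and p: "0 \<le> p" "p < 1" and s: "s \<in> erw_states L"
    and r: "r \<in> set_pmf (erw_pmf L p)"
  shows "\<bar>erw_mart p (erw_step s r) - erw_mart p s\<bar> \<le> 1 + p / (1 - p)"
proof -
  obtain i b where ib: "r = (i, b)" by (cases r)
  with r have "i < L" using set_pmf_erw_pmf[OF L] by blast
  moreover have "i < length (fst s)" using s \<open>i < L\<close> by (simp add: erw_states_def)
  ultimately show ?thesis
    using ib p by (simp add: erw_mart_erw_step abs_mult erw_states_nth[OF s])
qed

lemma norm_char_erw_mart_step:
  assumes L: "L \<ge> 1" and p: "0 \<le> p" "p < 1" and s: "s \<in> erw_states L"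
  defines "q \<equiv> p / (1 - p)"
  shows "cmod ((\<integral>r. iexp (h * erw_mart p (erw_step s r)) \<partial>erw_pmf L p)
      - complex_of_real (1 - q * h^2 / 2) * iexp (h * erw_mart p s)) \<le> (1 + q^3) * \<bar>h\<bar>^3 / 6"
proof -
  define a where "a = complex_of_real (1 - q * h^2 / 2)"
  define F where "F r = iexp (h * erw_mart p (erw_step s r)) - a * iexp (h * erw_mart p s)" for r
  have "(\<integral>r. iexp (h * erw_mart p (erw_step s r)) \<partial>erw_pmf L p) - a * iexp (h * erw_mart p s) =
      (\<integral>r. F r \<partial>erw_pmf L p)"
    unfolding F_def
    by (subst Bochner_Integration.integral_diff)
       (auto intro: integrable_measure_pmf_finite finite_set_pmf_erw_pmf[OF L])
  also have "cmod \<dots> \<le> (1 + q^3) * \<bar>h\<bar>^3 / 6"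
  proof (rule norm_integral_erw_pmf_le[OF L p(1) less_imp_le[OF p(2)]])
    fix i assume i: "i < L"
    define d where "d = real_of_int (fst s ! i)"
    have i': "i < length (fst s)" using s i by (simp add: erw_states_def)
    have step: "iexp (h * erw_mart p (erw_step s (i, b))) =
        iexp (h * erw_mart p s) * iexp (h * ((if b then 1 else - q) * d))" for b
      by (simp add: erw_mart_erw_step[OF i' p(2)] d_def q_def ring_distribs exp_add)
    have "p *\<^sub>R F (i, True) + (1 - p) *\<^sub>R F (i, False) =
        iexp (h * erw_mart p s) * (p * iexp (h * d) + (1 - p) * iexp (- q * h * d) - a)"
      unfolding F_def step by (simp add: scaleR_conv_of_real algebra_simps)
    also have "cmod \<dots> \<le> (1 + q^3) * \<bar>h\<bar>^3 / 6"
      unfolding a_def q_def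
      using sign_flip_char_approx[OF p, of d h] erw_states_nth[OF s i] by (simp add: norm_mult d_def)
    finally show "norm (p *\<^sub>R F (i, True) + (1 - p) *\<^sub>R F (i, False)) \<le> (1 + q^3) * \<bar>h\<bar>^3 / 6" .
  qed
  finally show ?thesis by (simp add: a_def)
qed

lemma nn_integral_exp_erw_mart_step:
  assumes L: "L \<ge> 1" and p: "0 \<le> p" "p < 1" and s: "s \<in> erw_states L"
    and l: "l > 0" and \<sigma>: "\<bar>\<sigma>\<bar> = 1"
  defines "q \<equiv> p / (1 - p)"
  shows "(\<integral>\<^sup>+r. exp (l * (\<sigma> * (erw_mart p (erw_step s r) - m))) \<partial>erw_pmf L p)
    \<le> ennreal (exp (l^2 * (1 + q)^2 / 2)) * ennreal (exp (l * (\<sigma> * (erw_mart p s - m))))"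
proof -
  define D where "D r = \<sigma> * (erw_mart p (erw_step s r) - erw_mart p s)" for r
  have "measure_pmf.expectation (erw_pmf L p) D = 0"
    unfolding D_def
    by (subst integral_mult_right_zero, subst Bochner_Integration.integral_diff)
       (auto intro: integrable_measure_pmf_finite finite_set_pmf_erw_pmf[OF L]
         simp: expectation_erw_mart_step[OF L p s])
  moreover have "\<bar>D r\<bar> \<le> 1 + q" if "r \<in> set_pmf (erw_pmf L p)" for r
    using abs_erw_mart_step_le[OF L p s that] \<sigma> by (simp add: D_def abs_mult q_def)
  ultimately have Hoeffding: "(\<integral>\<^sup>+r. exp (l * D r) \<partial>erw_pmf L p) \<le> exp (l^2 * (1 + q)^2 / 2)"
    by (rule Hoeffdings_lemma_pmf[OF _ _ l])
  have "(\<integral>\<^sup>+r. exp (l * (\<sigma> * (erw_mart p (erw_step s r) - m))) \<partial>erw_pmf L p) =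
      (\<integral>\<^sup>+r. ennreal (exp (l * (\<sigma> * (erw_mart p s - m)))) * ennreal (exp (l * D r)) \<partial>erw_pmf L p)"
    by (intro nn_integral_cong)
       (simp add: D_def mult_exp_exp algebra_simps flip: ennreal_mult)
  also have "\<dots> = ennreal (exp (l * (\<sigma> * (erw_mart p s - m)))) * (\<integral>\<^sup>+r. exp (l * D r) \<partial>erw_pmf L p)"
    by (rule nn_integral_cmult) simp
  also have "\<dots> \<le> ennreal (exp (l * (\<sigma> * (erw_mart p s - m)))) * ennreal (exp (l^2 * (1 + q)^2 / 2))"
    by (rule mult_left_mono[OF Hoeffding]) simp
  finally show ?thesis by (simp add: mult.commute)
qed

section \<open>Strong law of large numbers\<close>

lemma erw_mart_deviation_emeasure_le:
  assumes L: "L \<ge> 1" and p: "0 \<le> p" "p < 1" and s0: "s0 \<in> erw_states L"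
    and \<epsilon>: "\<epsilon> > 0" and \<sigma>: "\<bar>\<sigma>\<bar> = 1"
  defines "B \<equiv> 1 + p / (1 - p)"
  shows "emeasure (iterate_pmf (erw_pmf L p) erw_step t s0)
      {v. \<epsilon> * real t \<le> \<sigma> * (erw_mart p v - erw_mart p s0)} \<le> exp (- (real t * \<epsilon>^2 / (2 * B^2)))"
proof -
  have B: "B \<ge> 1" using p by (simp add: B_def)
  define l where "l = \<epsilon> / B^2"
    \<comment> \<open>minimises the Chernoff exponent \<open>l\<^sup>2 B\<^sup>2 / 2 - l \<epsilon>\<close>\<close>
  have l: "l > 0" using \<epsilon> B by (simp add: l_def)
  have "emeasure (iterate_pmf (erw_pmf L p) erw_step t s0)
      {v. \<epsilon> * real t \<le> \<sigma> * (erw_mart p v - erw_mart p s0)}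
    \<le> ennreal (exp (- l * (\<epsilon> * real t))) *
      (\<integral>\<^sup>+v. exp (l * (\<sigma> * (erw_mart p v - erw_mart p s0))) \<partial>iterate_pmf (erw_pmf L p) erw_step t s0)"
    by (rule Chernoff_bound_pmf[OF l])
  also have "\<dots> \<le> ennreal (exp (- l * (\<epsilon> * real t))) *
      (ennreal (exp (l^2 * B^2 / 2)) ^ t * ennreal (exp (l * (\<sigma> * (erw_mart p s0 - erw_mart p s0)))))"
    using nn_integral_exp_erw_mart_step[OF L p _ l \<sigma>]
    by (intro mult_left_mono nn_integral_iterate_pmf_le[OF erw_step_mem_erw_states[where p = p, OF L] _ s0])
       (simp_all add: B_def)
  also have "\<dots> = ennreal (exp (real t * (l^2 * B^2 / 2) - l * \<epsilon> * real t))"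
    by (simp add: ennreal_power mult_exp_exp algebra_simps flip: ennreal_mult exp_of_nat_mult)
  also have "real t * (l^2 * B^2 / 2) - l * \<epsilon> * real t = - (real t * \<epsilon>^2 / (2 * B^2))"
    using B by (simp add: l_def field_simps power2_eq_square)
  finally show ?thesis .
qed

lemma erw_mart_deviation_prob_le:
  assumes L: "L \<ge> 1" and p: "0 \<le> p" "p < 1" and s0: "s0 \<in> erw_states L" and \<epsilon>: "\<epsilon> > 0"
  defines "B \<equiv> 1 + p / (1 - p)"
  shows "measure_pmf.prob (iterate_pmf (erw_pmf L p) erw_step t s0)
      {v. \<epsilon> * real t \<le> \<bar>erw_mart p v - erw_mart p s0\<bar>} \<le> 2 * exp (- (\<epsilon>^2 / (2 * B^2))) ^ t"
proof -
  let ?K = "iterate_pmf (erw_pmf L p) erw_step t s0"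
  let ?A = "\<lambda>\<sigma>. {v. \<epsilon> * real t \<le> \<sigma> * (erw_mart p v - erw_mart p s0)}"
  have one_sided: "measure_pmf.prob ?K (?A \<sigma>) \<le> exp (- (\<epsilon>^2 / (2 * B^2))) ^ t" if "\<bar>\<sigma>\<bar> = 1" for \<sigma>
    using erw_mart_deviation_emeasure_le[OF L p s0 \<epsilon> that, of t]
    by (simp add: measure_pmf.emeasure_eq_measure B_def flip: exp_of_nat_mult)
  have "{v. \<epsilon> * real t \<le> \<bar>erw_mart p v - erw_mart p s0\<bar>} = ?A 1 \<union> ?A (-1)"
    by (auto simp: abs_if)
  then have "measure_pmf.prob ?K {v. \<epsilon> * real t \<le> \<bar>erw_mart p v - erw_mart p s0\<bar>}
      \<le> measure_pmf.prob ?K (?A 1) + measure_pmf.prob ?K (?A (-1))"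
    by (simp add: measure_Un_le)
  also have "\<dots> \<le> 2 * exp (- (\<epsilon>^2 / (2 * B^2))) ^ t"
    using one_sided[of 1] one_sided[of "-1"] by simp
  finally show ?thesis .
qed

lemma AE_erw_mart_deviation_eventually_less:
  assumes L: "L \<ge> 1" and p: "0 \<le> p" "p < 1" and s0: "s0 \<in> erw_states L" and \<epsilon>: "\<epsilon> > 0"
  shows "AE \<omega> in stream_space (measure_pmf (erw_pmf L p)). eventually (\<lambda>t.
    \<bar>erw_mart p (random_iterate erw_step t s0 \<omega>) - erw_mart p s0\<bar> < \<epsilon> * real t) sequentially"
proof -
  define B where "B = 1 + p / (1 - p)"
  have "B > 0" using p by (simp add: B_def add_pos_nonneg)
  then have "summable (\<lambda>t. 2 * exp (- (\<epsilon>^2 / (2 * B^2))) ^ t)"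
    using \<epsilon> by (intro summable_mult summable_geometric) simp
  then have "summable (\<lambda>t. measure_pmf.prob (iterate_pmf (erw_pmf L p) erw_step t s0)
      {v. \<epsilon> * real t \<le> \<bar>erw_mart p v - erw_mart p s0\<bar>})"
    by (rule summable_comparison_test'[where N = 0])
       (use erw_mart_deviation_prob_le[OF L p s0 \<epsilon>] in \<open>simp add: B_def\<close>)
  from AE_eventually_random_iterate_notin[OF this] show ?thesis
    by (simp add: not_le)
qed

lemma erw_strong_law:
  assumes L: "L \<ge> 1" and p: "0 \<le> p" "p < 1" and s0: "(jar0, x0) \<in> erw_states L"
  shows "AE \<omega> in erw_space L p. (\<lambda>t. real_of_int (erw_X jar0 x0 t \<omega>) / real t) \<longlonglongrightarrow> 0"
proof -
  let ?s = "\<lambda>t \<omega>. random_iterate erw_step t (jar0, x0) \<omega>"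
  let ?D = "\<lambda>t \<omega>. erw_mart p (?s t \<omega>) - erw_mart p (jar0, x0)"
  obtain C where C: "\<forall>s\<in>erw_states L. \<bar>real_of_int (snd s) - erw_mart p s\<bar> \<le> C"
    using erw_mart_close_to_X by blast
  have "AE \<omega> in stream_space (measure_pmf (erw_pmf L p)).
      \<forall>k. eventually (\<lambda>t. \<bar>?D t \<omega>\<bar> < real t / real (Suc k)) sequentially"
    unfolding AE_all_countable
    using AE_erw_mart_deviation_eventually_less[OF L p s0, of "1 / real (Suc _)"] by simp
  moreover have "AE \<omega> in stream_space (measure_pmf (erw_pmf L p)). \<forall>t. ?s t \<omega> \<in> erw_states L"
    by (rule AE_random_iterate_mem[OF erw_step_mem_erw_states[where p = p, OF L] s0])
  ultimately have "AE \<omega> in stream_space (measure_pmf (erw_pmf L p)).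
      (\<lambda>t. real_of_int (snd (?s t \<omega>)) / real t) \<longlonglongrightarrow> 0"
  proof eventually_elim
    case (elim \<omega>)
    show ?case
    proof (rule tendsto_div_zero_bounded_diff)
      show "(\<lambda>t. ?D t \<omega> / real t) \<longlonglongrightarrow> 0"
        by (rule tendsto_div_zero_if_eventually_abs_less) (use elim(1) in blast)
      show "\<bar>real_of_int (snd (?s t \<omega>)) - ?D t \<omega>\<bar> \<le> C + \<bar>erw_mart p (jar0, x0)\<bar>" for t
      proof -
        have "\<bar>real_of_int (snd (?s t \<omega>)) - erw_mart p (?s t \<omega>)\<bar> \<le> C"
          using C elim(2) by blast
        then show ?thesis by arith
      qed
    qed
  qed
  then show ?thesis unfolding erw_space_eq erw_X_eq_random_iterate .
qed

section \<open>Central limit theorem\<close>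

lemma norm_char_erw_X_sub_char_mart_le:
  assumes L: "L \<ge> 1" and s0: "s0 \<in> erw_states L"
    and C: "\<forall>s\<in>erw_states L. \<bar>real_of_int (snd s) - erw_mart p s\<bar> \<le> C"
  shows "cmod ((\<integral>v. iexp (h * real_of_int (snd v)) \<partial>iterate_pmf (erw_pmf L p) erw_step t s0)
      - (\<integral>v. iexp (h * erw_mart p v) \<partial>iterate_pmf (erw_pmf L p) erw_step t s0)) \<le> \<bar>h\<bar> * C"
proof -
  let ?K = "iterate_pmf (erw_pmf L p) erw_step t s0"
  have fin: "finite (set_pmf ?K)"
    by (intro finite_set_iterate_pmf finite_set_pmf_erw_pmf[OF L])
  have int: "integrable ?K g" for g :: "_ \<Rightarrow> complex"
    using fin by (rule integrable_measure_pmf_finite)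
  have "cmod ((\<integral>v. iexp (h * real_of_int (snd v)) \<partial>?K) - (\<integral>v. iexp (h * erw_mart p v) \<partial>?K))
      \<le> (\<integral>v. cmod (iexp (h * real_of_int (snd v)) - iexp (h * erw_mart p v)) \<partial>?K)"
    by (simp flip: Bochner_Integration.integral_diff[OF int int] add: integral_norm_bound)
  also have "\<dots> \<le> \<bar>h\<bar> * C"
  proof (rule measure_pmf.integral_le_const[OF integrable_measure_pmf_finite[OF fin]],
      unfold AE_measure_pmf_iff, intro ballI)
    fix v assume "v \<in> set_pmf ?K"
    then have "\<bar>real_of_int (snd v) - erw_mart p v\<bar> \<le> C"
      using C set_pmf_iterate_erw_pmf[OF L s0] by blast
    then have "\<bar>h * real_of_int (snd v) - h * erw_mart p v\<bar> \<le> \<bar>h\<bar> * C"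
      by (simp add: abs_mult mult_left_mono flip: right_diff_distrib)
    then show "cmod (iexp (h * real_of_int (snd v)) - iexp (h * erw_mart p v)) \<le> \<bar>h\<bar> * C"
      by (rule order.trans[OF norm_iexp_sub_iexp_le])
  qed
  finally show ?thesis .
qed

lemma norm_char_erw_mart_iterate_approx:
  assumes L: "L \<ge> 1" and p: "0 \<le> p" "p < 1" and s0: "s0 \<in> erw_states L"
  defines "q \<equiv> p / (1 - p)"
  assumes h: "q * h^2 \<le> 1"
  shows "cmod ((\<integral>v. iexp (h * erw_mart p v) \<partial>iterate_pmf (erw_pmf L p) erw_step t s0)
      - complex_of_real (1 - q * h^2 / 2) ^ t * iexp (h * erw_mart p s0)) \<le> real t * ((1 + q^3) * \<bar>h\<bar>^3 / 6)"
proof (rule norm_integral_iterate_pmf_approx[OF finite_set_pmf_erw_pmf[OF L] _ _ _ s0])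
  show "\<And>s r. s \<in> erw_states L \<Longrightarrow> r \<in> set_pmf (erw_pmf L p) \<Longrightarrow> erw_step s r \<in> erw_states L"
    by (rule erw_step_mem_erw_states[OF L])
  show "cmod ((\<integral>r. iexp (h * erw_mart p (erw_step s r)) \<partial>erw_pmf L p)
      - complex_of_real (1 - q * h^2 / 2) * iexp (h * erw_mart p s)) \<le> (1 + q^3) * \<bar>h\<bar>^3 / 6"
    if "s \<in> erw_states L" for s
    using norm_char_erw_mart_step[OF L p that] by (simp add: q_def)
  have "q \<ge> 0" using p by (simp add: q_def)
  with h have "\<bar>1 - q * h^2 / 2\<bar> \<le> 1" by simp
  then show "cmod (complex_of_real (1 - q * h^2 / 2)) \<le> 1" by (simp only: norm_of_real)
qed

lemma char_erw_X_tendsto: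
  assumes L: "L \<ge> 1" and p: "0 \<le> p" "p < 1" and s0: "s0 \<in> erw_states L"
  defines "q \<equiv> p / (1 - p)"
  shows "(\<lambda>t. \<integral>v. iexp (u * (real_of_int (snd v) / sqrt (real t))) \<partial>iterate_pmf (erw_pmf L p) erw_step t s0)
    \<longlonglongrightarrow> complex_of_real (exp (- (q * u^2 / 2)))"
proof -
  let ?K = "\<lambda>t. iterate_pmf (erw_pmf L p) erw_step t s0"
  define h where "h t = u / sqrt (real t)" for t :: nat
  define F where "F t = (\<integral>v. iexp (h t * real_of_int (snd v)) \<partial>?K t)" for t
  define G where "G t = (\<integral>v. iexp (h t * erw_mart p v) \<partial>?K t)" for t
  define H where "H t = complex_of_real (1 - q * (h t)^2 / 2) ^ t * iexp (h t * erw_mart p s0)" for t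
  have h2: "(h t)^2 = u^2 / real t" for t
    by (simp add: h_def power_divide)
  obtain C where C: "\<forall>s\<in>erw_states L. \<bar>real_of_int (snd s) - erw_mart p s\<bar> \<le> C"
    using erw_mart_close_to_X by blast
  have "(\<lambda>t. F t - G t) \<longlonglongrightarrow> 0"
  proof (rule Lim_null_comparison)
    show "(\<lambda>t. \<bar>u\<bar> * C / sqrt (real t)) \<longlonglongrightarrow> 0" by real_asymp
    have "norm (F t - G t) \<le> \<bar>u\<bar> * C / sqrt (real t)" for t
      using norm_char_erw_X_sub_char_mart_le[OF L s0 C, where h = "h t" and t = t]
      unfolding F_def G_def by (simp add: h_def abs_div)
    then show "eventually (\<lambda>t. norm (F t - G t) \<le> \<bar>u\<bar> * C / sqrt (real t)) sequentially"
      by simp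
  qed
  moreover have "(\<lambda>t. G t - H t) \<longlonglongrightarrow> 0"
  proof (rule Lim_null_comparison)
    show "(\<lambda>t. (1 + q^3) * (\<bar>u\<bar>^3 / sqrt (real t)) / 6) \<longlonglongrightarrow> 0" by real_asymp
    have "cmod (G t - H t) \<le> (1 + q^3) * (\<bar>u\<bar>^3 / sqrt (real t)) / 6" if t: "q * u^2 \<le> real t" "t > 0" for t
    proof -
      have "q * (h t)^2 \<le> 1" using t by (simp add: h2 field_simps)
      then have "cmod (G t - H t) \<le> real t * ((1 + q^3) * \<bar>h t\<bar>^3 / 6)"
        unfolding G_def H_def q_def by (rule norm_char_erw_mart_iterate_approx[OF L p s0])
      also have "\<dots> = (1 + q^3) * (real t * \<bar>h t\<bar>^3) / 6"
        by (simp add: algebra_simps)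
      also have "real t * \<bar>h t\<bar>^3 = \<bar>u\<bar>^3 / sqrt (real t)"
        using t by (simp add: h_def abs_div power_divide field_simps power3_eq_cube)
      finally show ?thesis .
    qed
    moreover have "eventually (\<lambda>t. q * u^2 \<le> real t \<and> t > 0) sequentially"
    proof (rule eventually_conj)
      show "eventually (\<lambda>t. q * u^2 \<le> real t) sequentially"
        using filterlim_real_sequentially unfolding filterlim_at_top by blast
    qed simp
    ultimately show "eventually (\<lambda>t. norm (G t - H t) \<le> (1 + q^3) * (\<bar>u\<bar>^3 / sqrt (real t)) / 6) sequentially"
      by (auto elim: eventually_mono)
  qed
  moreover have "H \<longlonglongrightarrow> complex_of_real (exp (- (q * u^2 / 2))) * iexp (0 * erw_mart p s0)"
  proof -
    have "h \<longlonglongrightarrow> 0" unfolding h_def by real_asymp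
    with tendsto_power_one_minus_sq_div_sqrt[of q u] show ?thesis
      unfolding H_def h_def of_real_power[symmetric] by (intro tendsto_intros)
  qed
  ultimately have "(\<lambda>t. (F t - G t) + (G t - H t) + H t) \<longlonglongrightarrow> 0 + 0 + complex_of_real (exp (- (q * u^2 / 2)))"
    by (intro tendsto_add) simp_all
  then show ?thesis by (simp add: F_def h_def algebra_simps)
qed

lemma
  assumes "v \<ge> 0"
  shows real_distribution_normal_law: "real_distribution (normal_law v)"
    and char_normal_law: "char (normal_law v) u = complex_of_real (exp (- (v * u^2 / 2)))"
proof -
  interpret std: real_distribution std_normal_distribution by (rule real_dist_normal_dist)
  have std: "distributed std_normal_distribution lborel (\<lambda>x. x) std_normal_density"
    by (simp add: distributed_def distr_id2)
  have scaled: "normal_law v = distr std_normal_distribution lborel (\<lambda>x. sqrt v * x)" if "v > 0"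
    using std.normal_density_affine[OF std, of "sqrt v" 0] that
    by (simp add: normal_law_def distributed_def)
  show "real_distribution (normal_law v)"
  proof (cases "v > 0")
    case True
    then show ?thesis unfolding scaled[OF True] real_distribution_def real_distribution_axioms_def
      by (auto intro!: std.prob_space_distr)
  qed (use assms in \<open>auto simp: normal_law_def real_distribution_def real_distribution_axioms_def prob_space_return\<close>)
  show "char (normal_law v) u = complex_of_real (exp (- (v * u^2 / 2)))"
  proof (cases "v = 0")
    case False
    with assms have "v > 0" by simp
    then have "char (normal_law v) u = char std_normal_distribution (u * sqrt v)"
      unfolding scaled[OF \<open>v > 0\<close>] char_def by (subst integral_distr) (auto simp: mult.assoc)
    then show ?thesis
      using \<open>v > 0\<close> by (simp add: char_std_normal_distribution power_mult_distrib)
  qed (simp add: normal_law_def char_def integral_return)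
qed

lemma measurable_erw_X_div [measurable]:
  "(\<lambda>\<omega>. real_of_int (erw_X jar0 x0 t \<omega>) / c) \<in> borel_measurable (erw_space L p)"
  unfolding erw_X_eq_random_iterate erw_space_eq by measurable

lemma char_distr_erw_X:
  "char (distr (erw_space L p) borel (\<lambda>\<omega>. real_of_int (erw_X jar0 x0 t \<omega>) / c)) u =
    (\<integral>v. iexp (u * (real_of_int (snd v) / c)) \<partial>iterate_pmf (erw_pmf L p) erw_step t (jar0, x0))"
proof -
  have "char (distr (erw_space L p) borel (\<lambda>\<omega>. real_of_int (erw_X jar0 x0 t \<omega>) / c)) u =
      (\<integral>\<omega>. iexp (u * (real_of_int (erw_X jar0 x0 t \<omega>) / c)) \<partial>erw_space L p)"
    unfolding char_def by (rule integral_distr) simp_all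
  also have "\<dots> = (\<integral>v. iexp (u * (real_of_int (snd v) / c)) \<partial>iterate_pmf (erw_pmf L p) erw_step t (jar0, x0))"
    unfolding erw_X_eq_random_iterate erw_space_eq
    by (rule integral_random_iterate[where g = "\<lambda>v. iexp (u * (real_of_int (snd v) / c))"])
  finally show ?thesis .
qed

lemma erw_central_limit:
  assumes L: "L \<ge> 1" and p: "0 \<le> p" "p < 1" and s0: "(jar0, x0) \<in> erw_states L"
  shows "weak_conv_m
    (\<lambda>t. distr (erw_space L p) borel (\<lambda>\<omega>. real_of_int (erw_X jar0 x0 t \<omega>) / sqrt (real t)))
    (normal_law (p / (1 - p)))"
proof (rule levy_continuity)
  interpret S: prob_space "erw_space L p"
    unfolding erw_space_eq by (rule prob_space_stream_space_pmf)
  show "real_distribution (distr (erw_space L p) borel (\<lambda>\<omega>. real_of_int (erw_X jar0 x0 t \<omega>) / sqrt (real t)))"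
    for t
    unfolding real_distribution_def real_distribution_axioms_def by (auto intro!: S.prob_space_distr)
  show "real_distribution (normal_law (p / (1 - p)))"
    using p by (intro real_distribution_normal_law) simp
  show "(\<lambda>t. char (distr (erw_space L p) borel (\<lambda>\<omega>. real_of_int (erw_X jar0 x0 t \<omega>) / sqrt (real t))) u)
      \<longlonglongrightarrow> char (normal_law (p / (1 - p))) u" for u
    using char_erw_X_tendsto[OF L p s0, of u] p by (simp add: char_distr_erw_X char_normal_law)
qed

theorem mainTheorem13:
  fixes L :: nat and p :: real and jar0 :: "int list" and x0 :: int
  assumes "L \<ge> 1" and "0 \<le> p" and "p < 1"
    and "length jar0 = L" and "set jar0 \<subseteq> {1, -1}"
  shows "(AE \<omega> in erw_space L p.
           (\<lambda>t. real_of_int (erw_X jar0 x0 t \<omega>) / real t) \<longlonglongrightarrow> 0) \<and>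
         weak_conv_m
           (\<lambda>t. distr (erw_space L p) borel (\<lambda>\<omega>. real_of_int (erw_X jar0 x0 t \<omega>) / sqrt (real t)))
           (normal_law (p / (1 - p)))"
proof -
  have "(jar0, x0) \<in> erw_states L" using assms(4,5) by (simp add: erw_states_def)
  with assms(1-3) show ?thesis by (simp add: erw_strong_law erw_central_limit)
qed

end
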